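(* Let $n\ge 3$ and $k\ge 1$. Let $G=C_n$ be the cycle $g_1g_2\cdots g_ng_1$ and let $H=C_{3k+2}$ have vertex set $\{1,2,\dots,3k+2\}$ with $i$ adjacent to $i+1$ for $1\le i\le 3k+1$ and $3k+2$ adjacent to $1$. Define $f\colon V(G)\to V(H)$ by $f(g_i)=1$ if $i\equiv 1\pmod 4$, $f(g_i)=2$ if $i\equiv 2\pmod 4$, and $f(g_i)=3$ otherwise ($i\in\{1,\dots,n\}$). Then \[ \gamma(G\otimes_f H)\le kn+\left\lfloor \frac n2\right\rfloor+\left\lceil \frac n4\right\rceil-\left\lfloor \frac n4\right\rfloor . \]
   Context: $\gamma$ denotes the domination number. For graphs $G,H$ and a function $f\colon V(G)\to V(H)$, the Sierpiński product $G\otimes_f H$ is the graph with vertex set $V(G)\times V(H)$ and edges of two types: (type 1) $(g,h)(g,h')$ for every $g\in V(G)$ and every edge $hh'\in E(H)$; (type 2) $(g,f(g'))(g',f(g))$ for every edge $gg'\in E(G)$. *)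

theory Defs
  imports Complex_Main
begin

text \<open>Simple graphs are given by a vertex set V and a symmetric irreflexive adjacency relation E.\<close>

definition dominating_set :: "'a set \<Rightarrow> ('a \<Rightarrow> 'a \<Rightarrow> bool) \<Rightarrow> 'a set \<Rightarrow> bool" where
  "dominating_set V E D \<longleftrightarrow> D \<subseteq> V \<and> (\<forall>v\<in>V. v \<in> D \<or> (\<exists>u\<in>D. E u v))"

definition domination_number :: "'a set \<Rightarrow> ('a \<Rightarrow> 'a \<Rightarrow> bool) \<Rightarrow> nat" where
  "domination_number V E = Min {card D | D. dominating_set V E D}"

definition sierpinski_vertices :: "'a set \<Rightarrow> 'b set \<Rightarrow> ('a \<times> 'b) set" where
  "sierpinski_vertices VG VH = VG \<times> VH"

definition sierpinski_adj ::
  "('a \<Rightarrow> 'a \<Rightarrow> bool) \<Rightarrow> ('b \<Rightarrow> 'b \<Rightarrow> bool) \<Rightarrow> ('a \<Rightarrow> 'b) \<Rightarrow> 'a \<times> 'b \<Rightarrow> 'a \<times> 'b \<Rightarrow> bool" where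
  "sierpinski_adj EG EH f x y \<longleftrightarrow>
     (fst x = fst y \<and> EH (snd x) (snd y)) \<or>
     (EG (fst x) (fst y) \<and> snd x = f (fst y) \<and> snd y = f (fst x))"

definition cycle_vertices :: "nat \<Rightarrow> nat set" where
  "cycle_vertices m = {1..m}"

definition cycle_adj :: "nat \<Rightarrow> nat \<Rightarrow> nat \<Rightarrow> bool" where
  "cycle_adj m i j \<longleftrightarrow> i \<in> {1..m} \<and> j \<in> {1..m} \<and>
     (j = i + 1 \<or> i = j + 1 \<or> (i = m \<and> j = 1) \<or> (i = 1 \<and> j = m))"

end

theory Submission
  imports Defs
begin

text \<open>Every vertex \<open>(i, h)\<close> of \<open>C\<^bsub>n\<^esub> \<otimes>\<^sub>f C\<^bsub>3k+2\<^esub>\<close> lies in the copy \<open>{i} \<times> C\<^bsub>3k+2\<^esub>\<close>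
  (the layer of \<open>i\<close>). A set of \<open>k + 1\<close> vertices dominates a whole layer, while \<open>k\<close> vertices
  taken every third position dominate all of it except two consecutive vertices. Use the full
  pattern on the even layers and the cheap one on the odd layers. A gap vertex \<open>(i, h)\<close> of an
  odd layer is then dominated along the type 2 edge from \<open>(j, f i)\<close>, where \<open>j\<close> is the neighbour
  of \<open>i\<close> with \<open>f j = h\<close>: the labels of the two neighbours of an odd \<open>i\<close> are \<open>2\<close> and \<open>3\<close>, and
  \<open>f i \<in> {1, 3}\<close> lies in every full layer. Near the wrap-around of \<open>C\<^bsub>n\<^esub>\<close> at most one further
  layer has to be full, and only when \<open>4\<close> does not divide \<open>n\<close>.\<close>

definition dominated_by :: "('a \<Rightarrow> 'a \<Rightarrow> bool) \<Rightarrow> 'a set \<Rightarrow> 'a \<Rightarrow> bool" where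
  "dominated_by E D v \<longleftrightarrow> v \<in> D \<or> (\<exists>u\<in>D. E u v)"

lemma dominating_set_iff_dominated_by:
  "dominating_set V E D \<longleftrightarrow> D \<subseteq> V \<and> (\<forall>v\<in>V. dominated_by E D v)"
  unfolding dominating_set_def dominated_by_def ..

lemma dominated_by_mono: "dominated_by E D v \<Longrightarrow> D \<subseteq> D' \<Longrightarrow> dominated_by E D' v"
  unfolding dominated_by_def by blast

lemma domination_number_le_card:
  assumes "finite V" "dominating_set V E D"
  shows "domination_number V E \<le> card D"
proof -
  have "{card D | D. dominating_set V E D} \<subseteq> {..card V}"
    using assms(1) card_mono unfolding dominating_set_def by auto
  then have "finite {card D | D. dominating_set V E D}"
    using finite_subset by blast
  then show ?thesis
    unfolding domination_number_def using assms(2) by (intro Min_le) auto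
qed

lemma sierpinski_dominated_within_layer:
  assumes "g \<in> A" "dominated_by EH (L g) h"
  shows "dominated_by (sierpinski_adj EG EH f) (Sigma A L) (g, h)"
  using assms unfolding dominated_by_def sierpinski_adj_def by auto

lemma sierpinski_dominated_across:
  assumes "g' \<in> A" "EG g' g" "f g \<in> L g'"
  shows "dominated_by (sierpinski_adj EG EH f) (Sigma A L) (g, f g')"
  using assms unfolding dominated_by_def sierpinski_adj_def by force

lemma ceiling_minus_floor_divide_nat:
  assumes "d > 0"
  shows "\<lceil>real n / real d\<rceil> - \<lfloor>real n / real d\<rfloor> = of_bool (\<not> d dvd n)"
proof -
  have floor: "\<lfloor>real n / real d\<rfloor> = int (n div d)"
    using floor_divide_of_nat_eq[of n d] by simp
  have "real n / real d = of_int \<lfloor>real n / real d\<rfloor> \<longleftrightarrow> n = d * (n div d)"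
    using assms by (simp add: floor field_simps) (metis of_nat_eq_iff of_nat_mult)
  also have "\<dots> \<longleftrightarrow> d dvd n"
    by (metis dvd_def dvd_mult_div_cancel)
  finally show ?thesis
    by (simp add: ceiling_altdef[of "real n / real d"])
qed

lemma cycle_adj_succ: "1 \<le> i \<Longrightarrow> i < m \<Longrightarrow> cycle_adj m i (i + 1) \<and> cycle_adj m (i + 1) i"
  unfolding cycle_adj_def by auto

lemma cycle_adj_wrap: "1 \<le> m \<Longrightarrow> cycle_adj m m 1 \<and> cycle_adj m 1 m"
  unfolding cycle_adj_def by auto

lemma cycle_dominated_by_progression:
  assumes "1 \<le> 3 * l + c" "3 * u + c \<le> m" "3 * l + c \<le> h + 1" "h \<le> 3 * u + c + 1" "h \<in> {1..m}"
  shows "dominated_by (cycle_adj m) ((\<lambda>j. 3 * j + c) ` {l..u}) h"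
proof -
  define j where "j = (h + 1 - c) div 3"
  have j: "j \<in> {l..u}" and near: "h - 1 \<le> 3 * j + c" "3 * j + c \<le> h + 1"
    using assms unfolding j_def by auto
  have "3 * j + c \<in> (\<lambda>j. 3 * j + c) ` {l..u}"
    using j by blast
  moreover have "3 * j + c \<in> {1..m}"
    using j assms by auto
  moreover have "3 * j + c = h \<or> 3 * j + c + 1 = h \<or> h + 1 = 3 * j + c"
    using near by linarith
  ultimately show ?thesis
    using assms(5) cycle_adj_succ[of "3 * j + c" m] cycle_adj_succ[of h m]
    unfolding dominated_by_def by auto
qed

definition gap23_layer :: "nat \<Rightarrow> nat set" where
  "gap23_layer k = (\<lambda>j. 3 * j + 2) ` {1..k}"

definition gap12_layer :: "nat \<Rightarrow> nat set" where
  "gap12_layer k = (\<lambda>j. 3 * j + 1) ` {1..k}"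

definition full_layer :: "nat \<Rightarrow> nat set" where
  "full_layer k = insert 1 ((\<lambda>j. 3 * j) ` {1..k})"

lemma gap23_layer_dominates:
  assumes "k \<ge> 1" "h \<in> {1..3 * k + 2}" "h \<notin> {2, 3}"
  shows "dominated_by (cycle_adj (3 * k + 2)) (gap23_layer k) h"
proof (cases "h = 1")
  case True
  then show ?thesis
    using assms(1,2) cycle_adj_wrap[of "3 * k + 2"] unfolding dominated_by_def gap23_layer_def by force
next
  case False
  then show ?thesis
    using assms unfolding gap23_layer_def by (intro cycle_dominated_by_progression) auto
qed

lemma gap12_layer_dominates:
  assumes "h \<in> {1..3 * k + 2}" "h \<notin> {1, 2}"
  shows "dominated_by (cycle_adj (3 * k + 2)) (gap12_layer k) h"
  using assms unfolding gap12_layer_def by (intro cycle_dominated_by_progression) auto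

lemma full_layer_dominates:
  assumes "h \<in> {1..3 * k + 2}"
  shows "dominated_by (cycle_adj (3 * k + 2)) (full_layer k) h"
proof -
  consider "h = 1" | "h = 3 * k + 2" | "2 \<le> h" "h \<le> 3 * k + 1"
    using assms by fastforce
  then show ?thesis
  proof cases
    case 1
    then show ?thesis unfolding dominated_by_def full_layer_def by simp
  next
    case 2
    then show ?thesis
      using cycle_adj_wrap[of "3 * k + 2"] unfolding dominated_by_def full_layer_def by auto
  next
    case 3
    then have "dominated_by (cycle_adj (3 * k + 2)) ((\<lambda>j. 3 * j + 0) ` {1..k}) h"
      using assms by (intro cycle_dominated_by_progression) auto
    then show ?thesis
      unfolding full_layer_def by (auto elim: dominated_by_mono)
  qed
qed

lemma card_gap23_layer: "card (gap23_layer k) \<le> k"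
  unfolding gap23_layer_def using card_image_le[of "{1..k}"] by simp

lemma card_gap12_layer: "card (gap12_layer k) \<le> k"
  unfolding gap12_layer_def using card_image_le[of "{1..k}"] by simp

lemma card_full_layer: "card (full_layer k) \<le> k + 1"
  unfolding full_layer_def using card_image_le[of "{1..k}" "\<lambda>j. 3 * j"]
  by (simp add: card_insert_if)

definition cycle_label :: "nat \<Rightarrow> nat" where
  "cycle_label i = (if i mod 4 = 1 then 1 else if i mod 4 = 2 then 2 else 3)"

lemma cycle_label_odd:
  assumes "odd i"
  shows "cycle_label i \<in> {1, 3}"
proof -
  have "i mod 4 \<noteq> 2"
    using assms by presburger
  then show ?thesis
    unfolding cycle_label_def by auto
qed

lemma cycle_label_odd_neighbours:
  assumes "odd i"
  shows "{cycle_label (i - 1), cycle_label (i + 1)} = {2, 3}"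
proof -
  have "i mod 4 = 1 \<or> i mod 4 = 3"
    using assms by presburger
  then obtain q where "i = 4 * q + 1 \<or> i = 4 * q + 3"
    by (metis mult_div_mod_eq)
  then have "(i - 1) mod 4 = 0 \<and> (i + 1) mod 4 = 2 \<or> (i - 1) mod 4 = 2 \<and> (i + 1) mod 4 = 0"
    by (elim disjE) (simp_all, presburger+)
  then show ?thesis
    unfolding cycle_label_def by auto
qed

text \<open>For odd \<open>n\<close> the layers \<open>n\<close> and \<open>1\<close> are adjacent odd layers, so one of them is full. For
  \<open>n \<equiv> 2 (mod 4)\<close> both neighbours of layer \<open>1\<close> carry label \<open>2\<close>, so it must be full; for
  \<open>n \<equiv> 1 (mod 4)\<close> they carry labels \<open>2\<close> and \<open>1\<close>, whence the gap \<open>{1, 2}\<close> there.\<close>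

definition is_full_layer :: "nat \<Rightarrow> nat \<Rightarrow> bool" where
  "is_full_layer n i \<longleftrightarrow> even i \<or> (odd n \<and> i = n) \<or> (n mod 4 = 2 \<and> i = 1)"

definition layer_gap :: "nat \<Rightarrow> nat \<Rightarrow> nat set" where
  "layer_gap n i = (if n mod 4 = 1 \<and> i = 1 then {1, 2} else {2, 3})"

definition layer :: "nat \<Rightarrow> nat \<Rightarrow> nat \<Rightarrow> nat set" where
  "layer n k i = (if is_full_layer n i then full_layer k
     else if n mod 4 = 1 \<and> i = 1 then gap12_layer k else gap23_layer k)"

lemma layer_dominates:
  assumes "k \<ge> 1" "h \<in> {1..3 * k + 2}" "is_full_layer n i \<or> h \<notin> layer_gap n i"
  shows "dominated_by (cycle_adj (3 * k + 2)) (layer n k i) h"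
  using assms full_layer_dominates gap12_layer_dominates gap23_layer_dominates
  unfolding layer_def layer_gap_def by auto

lemma layer_gap_covered_by_full_neighbour:
  assumes "n \<ge> 3" "i \<in> {1..n}" "\<not> is_full_layer n i" "h \<in> layer_gap n i"
  shows "\<exists>j\<in>{1..n}. cycle_adj n j i \<and> is_full_layer n j \<and> cycle_label j = h"
proof (cases "i = 1")
  case True
  have "n mod 4 \<noteq> 2"
    using assms(3) True unfolding is_full_layer_def by auto
  then have "h \<in> {cycle_label 2, cycle_label n}"
    using assms(4) True unfolding layer_gap_def cycle_label_def by auto
  moreover have "cycle_adj n 2 1" "cycle_adj n n 1"
    using assms(1) unfolding cycle_adj_def by auto
  moreover have "is_full_layer n 2" "is_full_layer n n"
    unfolding is_full_layer_def by auto
  ultimately show ?thesis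
    using True assms(1) by auto
next
  case False
  have "odd i" "i \<noteq> n"
    using assms(3) unfolding is_full_layer_def by auto
  then have interior: "1 < i" "i < n"
    using assms(2) False by auto
  have "h \<in> {cycle_label (i - 1), cycle_label (i + 1)}"
    using assms(4) False cycle_label_odd_neighbours[OF \<open>odd i\<close>] unfolding layer_gap_def by auto
  moreover have "cycle_adj n (i - 1) i" "cycle_adj n (i + 1) i"
    using interior unfolding cycle_adj_def by auto
  moreover have "is_full_layer n (i - 1)" "is_full_layer n (i + 1)"
    using \<open>odd i\<close> interior unfolding is_full_layer_def by auto
  moreover have "i - 1 \<in> {1..n}" "i + 1 \<in> {1..n}"
    using interior by auto
  ultimately show ?thesis
    by blast
qed

lemma layers_dominating_set:
  assumes "n \<ge> 3" "k \<ge> 1"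
  shows "dominating_set (sierpinski_vertices (cycle_vertices n) (cycle_vertices (3 * k + 2)))
           (sierpinski_adj (cycle_adj n) (cycle_adj (3 * k + 2)) cycle_label) (Sigma {1..n} (layer n k))"
  unfolding dominating_set_iff_dominated_by
proof (intro conjI ballI)
  have "layer n k i \<subseteq> {1..3 * k + 2}" for i
    using assms(2) unfolding layer_def full_layer_def gap12_layer_def gap23_layer_def by auto
  then show "Sigma {1..n} (layer n k) \<subseteq> sierpinski_vertices (cycle_vertices n) (cycle_vertices (3 * k + 2))"
    unfolding sierpinski_vertices_def cycle_vertices_def by auto
next
  fix v
  assume "v \<in> sierpinski_vertices (cycle_vertices n) (cycle_vertices (3 * k + 2))"
  then obtain i h where v: "v = (i, h)" "i \<in> {1..n}" "h \<in> {1..3 * k + 2}"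
    unfolding sierpinski_vertices_def cycle_vertices_def by auto
  show "dominated_by (sierpinski_adj (cycle_adj n) (cycle_adj (3 * k + 2)) cycle_label)
          (Sigma {1..n} (layer n k)) v"
  proof (cases "is_full_layer n i \<or> h \<notin> layer_gap n i")
    case True
    then show ?thesis
      using v assms(2) layer_dominates by (simp add: sierpinski_dominated_within_layer)
  next
    case False
    then obtain j where j: "j \<in> {1..n}" "cycle_adj n j i" "is_full_layer n j" "cycle_label j = h"
      using layer_gap_covered_by_full_neighbour[OF assms(1) v(2)] by blast
    have "odd i"
      using False unfolding is_full_layer_def by auto
    then have "cycle_label i \<in> layer n k j"
      using j(3) assms(2) cycle_label_odd unfolding layer_def full_layer_def by force
    then show ?thesis
      using j v(1) by (auto intro: sierpinski_dominated_across)
  qed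
qed

lemma card_full_layers:
  "card {i \<in> {1..n}. is_full_layer n i} \<le> n div 2 + of_bool (\<not> 4 dvd n)"
proof -
  define extra where "extra = (if odd n then {n} else if n mod 4 = 2 then {1} else {})"
  have card_extra: "card extra \<le> of_bool (\<not> 4 dvd n)"
  proof -
    have "4 dvd n \<Longrightarrow> even n \<and> n mod 4 \<noteq> 2"
      by presburger
    then show ?thesis
      unfolding extra_def by auto
  qed
  have "{i \<in> {1..n}. is_full_layer n i} \<subseteq> (\<lambda>j. 2 * j) ` {1..n div 2} \<union> extra"
  proof
    fix i
    assume i: "i \<in> {i \<in> {1..n}. is_full_layer n i}"
    show "i \<in> (\<lambda>j. 2 * j) ` {1..n div 2} \<union> extra"
    proof (cases "even i")
      case True
      then show ?thesis
        using i by (auto elim!: evenE)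
    next
      case False
      moreover have "n mod 4 = 2 \<Longrightarrow> even n"
        by presburger
      ultimately show ?thesis
        using i unfolding is_full_layer_def extra_def by auto
    qed
  qed
  then have "card {i \<in> {1..n}. is_full_layer n i} \<le> card ((\<lambda>j. 2 * j) ` {1..n div 2} \<union> extra)"
    by (intro card_mono) (simp_all add: extra_def)
  also have "\<dots> \<le> card ((\<lambda>j. 2 * j) ` {1..n div 2}) + card extra"
    by (rule card_Un_le)
  also have "\<dots> \<le> n div 2 + of_bool (\<not> 4 dvd n)"
    using card_image_le[of "{1..n div 2}" "\<lambda>j. 2 * j"] card_extra by simp
  finally show ?thesis .
qed

lemma card_layers:
  "card (Sigma {1..n} (layer n k)) \<le> k * n + n div 2 + of_bool (\<not> 4 dvd n)"
proof -
  have "card (Sigma {1..n} (layer n k)) = (\<Sum>i\<in>{1..n}. card (layer n k i))"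
    by (simp add: layer_def full_layer_def gap12_layer_def gap23_layer_def)
  also have "\<dots> \<le> (\<Sum>i\<in>{1..n}. k + of_bool (is_full_layer n i))"
    using card_full_layer card_gap12_layer card_gap23_layer
    by (intro sum_mono) (auto simp: layer_def intro: le_trans)
  also have "\<dots> = k * n + card {i \<in> {1..n}. is_full_layer n i}"
    by (simp add: sum.distrib Int_def conj_commute)
  finally show ?thesis
    using card_full_layers[of n] by linarith
qed

theorem mainTheorem10:
  fixes n k :: nat and f :: "nat \<Rightarrow> nat"
  assumes "n \<ge> 3" and "k \<ge> 1"
    and "\<And>i. f i = (if i mod 4 = 1 then 1 else if i mod 4 = 2 then 2 else 3)"
  shows "int (domination_number (sierpinski_vertices (cycle_vertices n) (cycle_vertices (3*k+2)))
              (sierpinski_adj (cycle_adj n) (cycle_adj (3*k+2)) f))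
         \<le> int (k*n) + \<lfloor>real n / 2\<rfloor> + \<lceil>real n / 4\<rceil> - \<lfloor>real n / 4\<rfloor>"
    (is "int (domination_number ?V ?E) \<le> _")
proof -
  have "f = cycle_label"
    using assms(3) unfolding cycle_label_def by auto
  then have "dominating_set ?V ?E (Sigma {1..n} (layer n k))"
    using layers_dominating_set[OF assms(1,2)] by simp
  moreover have "finite ?V"
    unfolding sierpinski_vertices_def cycle_vertices_def by simp
  ultimately have "domination_number ?V ?E \<le> k * n + n div 2 + of_bool (\<not> 4 dvd n)"
    using domination_number_le_card card_layers le_trans by blast
  then have "int (domination_number ?V ?E) \<le> int (k * n + n div 2 + of_bool (\<not> 4 dvd n))"
    by (rule of_nat_mono)
  moreover have "\<lfloor>real n / 2\<rfloor> = int (n div 2)"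
    using floor_divide_of_nat_eq[of n 2] by simp
  moreover have "\<lceil>real n / 4\<rceil> - \<lfloor>real n / 4\<rfloor> = of_bool (\<not> 4 dvd n)"
    using ceiling_minus_floor_divide_nat[of 4 n] by simp
  ultimately show ?thesis
    by simp
qed

end
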